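(* Let $N\ge 2$ and $1\le K<N$ be integers, let $\mu>0$ and $0<\epsilon<1$. Let $\mathbf{W}$, $\mathbf{D}$, $\bar{\mathbf W}$, $\mathbf L_{rw}$ be as in the context (directed graph with positive out-degrees and a node reachable from every other node by a directed path), and let $\mathcal A_K$ denote the set of $N\times N$ diagonal matrices $\mathbf A$ with $A_{i,i}\in\{0,1\}$ for all $i$ and $\mathrm{tr}(\mathbf A)=K$. Put $$n \;=\; 3+\max_{i}\sum_{j=1}^{K-1}\bar W_{[j],i},$$ where $\bar W_{[j],i}$ denotes the $j$-th largest entry of the $i$-th column of $\bar{\mathbf W}$. Define constants $c,\delta,\rho>0$ as follows. (i) If $\mu\le 1$: $c = n\big/\min_{\mathbf A\in\mathcal A_K}\lambda_{\min}(\mathbf L_{rw}^\top\mathbf L_{rw}+\epsilon\mathbf A)$, $\delta=\sqrt{1-\epsilon\mu}$, and $\rho=\frac{-\delta c+\sqrt{\delta^2c^2+4\mu}}{2}$. (ii) If $\mu>1$: $c = n\big/\min_{\mathbf A\in\mathcal A_K}\lambda_{\min}(\mathbf A+\epsilon\mathbf L_{rw}^\top\mathbf L_{rw})$, $\rho=\sqrt{\mu-\epsilon}$, and $\delta=\frac{-\rho c+\sqrt{\rho^2c^2+4}}{2}$. Assume that for every $\mathbf A\in\mathcal A_K$ the real matrix $\delta\mathbf A+\rho\mathbf L_{rw}$ is diagonalizable, and fix for each such $\mathbf A$ a factorization $\delta\mathbf A+\rho\mathbf L_{rw}=\mathbf P_{\mathbf A}\boldsymbol\Lambda_{\mathbf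 A}\mathbf P_{\mathbf A}^{-1}$ with $\mathbf P_{\mathbf A}\in\mathbb C^{N\times N}$ invertible and $\boldsymbol\Lambda_{\mathbf A}$ diagonal. Let $\gamma_{\max}=\max_{\mathbf A\in\mathcal A_K}\gamma(\mathbf P_{\mathbf A})$. Then for every $\mathbf A\in\mathcal A_K$ and every diagonal matrix $\mathbf S$ with strictly positive diagonal entries such that $\lambda^-_{\min}\big(\mathbf S(\delta\mathbf A+\rho\mathbf L_{rw})\mathbf S^{-1}\big)\ge 0$, we have $$\frac{\Big(\lambda^-_{\min}\big(\mathbf S(\delta\mathbf A+\rho\mathbf L_{rw})\mathbf S^{-1}\big)\Big)^2}{\gamma_{\max}^2}\;\le\;\lambda_{\min}\big(\mathbf A+\mu\,\mathbf L_{rw}^\top\mathbf L_{rw}\big).$$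
   Context: A directed graph on $N$ nodes is given by an adjacency matrix $\mathbf W\in\mathbb R^{N\times N}$ with $W_{i,j}\ge 0$ ($W_{i,j}>0$ iff there is a directed edge $(i,j)$) and $W_{i,i}=0$ for all $i$. The out-degree matrix is the diagonal matrix $\mathbf D$ with $D_{i,i}=\sum_j W_{i,j}$; it is assumed that $D_{i,i}>0$ for all $i$. The normalized adjacency matrix is $\bar{\mathbf W}=\mathbf D^{-1}\mathbf W$ (so $\bar{\mathbf W}\mathbf 1=\mathbf 1$) and the random-walk Laplacian is $\mathbf L_{rw}=\mathbf I-\bar{\mathbf W}$. It is assumed that there exists a node $v$ such that from every other node there is a directed path to $v$. For a real square matrix $\mathbf M$, $\lambda^-_{\min}(\mathbf M)=\min_i\big(M_{i,i}-\sum_{j\ne i}|M_{i,j}|\big)$ (smallest Gershgorin disc left-end). For a symmetric matrix, $\lambda_{\min},\lambda_{\max}$ denote its smallest/largest eigenvalue. For an invertible complex matrix $\mathbf P$, $\gamma(\mathbf P)=\lambda_{\max}(\mathbf P^*\mathbf P)/\lambda_{\min}(\mathbf P^*\mathbf P)$ ($\mathbf P^*$ the conjugate transpose). *)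

theory Defs
  imports "HOL-Analysis.Analysis" "HOL-Library.Multiset"
begin

definition outdeg :: "real^'n^'n \<Rightarrow> 'n \<Rightarrow> real" where
  "outdeg W i = (\<Sum>j\<in>UNIV. W $ i $ j)"

definition Wbar :: "real^'n^'n \<Rightarrow> real^'n^'n" where
  "Wbar W = (\<chi> i j. W $ i $ j / outdeg W i)"

definition Lrw :: "real^'n^'n \<Rightarrow> real^'n^'n" where
  "Lrw W = mat 1 - Wbar W"

definition edges :: "real^'n^'n \<Rightarrow> ('n \<times> 'n) set" where
  "edges W = {(i, j). W $ i $ j > 0}"

definition lam_min :: "real^'n^'n \<Rightarrow> real" where
  "lam_min M = Min {l. \<exists>v. v \<noteq> 0 \<and> M *v v = l *s v}"

text \<open>Real eigenvalues of a complex (Hermitian) matrix; all its eigenvalues are real.\<close>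
definition c_real_eigs :: "complex^'n^'n \<Rightarrow> real set" where
  "c_real_eigs M = {l. \<exists>v. v \<noteq> 0 \<and> M *v v = complex_of_real l *s v}"

definition lam_min_c :: "complex^'n^'n \<Rightarrow> real" where
  "lam_min_c M = Min (c_real_eigs M)"

definition lam_max_c :: "complex^'n^'n \<Rightarrow> real" where
  "lam_max_c M = Max (c_real_eigs M)"

definition conj_transpose :: "complex^'n^'n \<Rightarrow> complex^'n^'n" where
  "conj_transpose P = (\<chi> i j. cnj (P $ j $ i))"

definition gamma :: "complex^'n^'n \<Rightarrow> real" where
  "gamma P = lam_max_c (conj_transpose P ** P) / lam_min_c (conj_transpose P ** P)"

text \<open>Smallest Gershgorin disc left end.\<close>
definition lam_minus_min :: "real^'n^'n \<Rightarrow> real" where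
  "lam_minus_min M = Min (range (\<lambda>i. M $ i $ i - (\<Sum>j\<in>UNIV - {i}. \<bar>M $ i $ j\<bar>)))"

definition cmat :: "real^'n^'n \<Rightarrow> complex^'n^'n" where
  "cmat M = (\<chi> i j. complex_of_real (M $ i $ j))"

definition is_diag :: "'a::zero^'n^'n \<Rightarrow> bool" where
  "is_diag M \<longleftrightarrow> (\<forall>i j. i \<noteq> j \<longrightarrow> M $ i $ j = 0)"

definition AK :: "nat \<Rightarrow> (real^'n^'n) set" where
  "AK K = {A. is_diag A \<and> (\<forall>i. A $ i $ i \<in> {0, 1}) \<and> trace A = real K}"

text \<open>Entries of column i, in nonincreasing order (index 0 = largest).\<close>
definition col_desc :: "real^'n^'n \<Rightarrow> 'n \<Rightarrow> real list" where
  "col_desc M i = rev (sorted_list_of_multiset (image_mset (\<lambda>j. M $ j $ i) (mset_set UNIV)))"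

definition n_const :: "real^'n^'n \<Rightarrow> nat \<Rightarrow> real" where
  "n_const W K = 3 + Max (range (\<lambda>i. \<Sum>j<K - 1. col_desc (Wbar W) i ! j))"

definition c_const :: "real^'n^'n \<Rightarrow> nat \<Rightarrow> real \<Rightarrow> real \<Rightarrow> real" where
  "c_const W K eps mu =
     (if mu \<le> 1
      then n_const W K / Min ((\<lambda>A. lam_min (transpose (Lrw W) ** Lrw W + eps *\<^sub>R A)) ` AK K)
      else n_const W K / Min ((\<lambda>A. lam_min (A + eps *\<^sub>R (transpose (Lrw W) ** Lrw W))) ` AK K))"

definition delta_const :: "real^'n^'n \<Rightarrow> nat \<Rightarrow> real \<Rightarrow> real \<Rightarrow> real" where
  "delta_const W K eps mu =
     (if mu \<le> 1 then sqrt (1 - eps * mu)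
      else (let c = c_const W K eps mu; r = sqrt (mu - eps)
            in (- r * c + sqrt (r^2 * c^2 + 4)) / 2))"

definition rho_const :: "real^'n^'n \<Rightarrow> nat \<Rightarrow> real \<Rightarrow> real \<Rightarrow> real" where
  "rho_const W K eps mu =
     (if mu \<le> 1
      then (let c = c_const W K eps mu; d = sqrt (1 - eps * mu)
            in (- d * c + sqrt (d^2 * c^2 + 4 * mu)) / 2)
      else sqrt (mu - eps))"

end

theory Submission
  imports Defs
begin

text \<open>Write \<open>M = \<delta> A + \<rho> L\<close> with \<open>L = L\<^sub>r\<^sub>w\<close>. On one side, the column estimate
  \<open>2 \<langle>A x, L x\<rangle> \<le> n \<parallel>x\<parallel>\<^sup>2\<close>, the definition of \<open>c\<close> and the quadratic equations defining
  \<open>\<delta>\<close> and \<open>\<rho>\<close> combine into \<open>\<parallel>M x\<parallel>\<^sup>2 \<le> x\<^sup>T (A + \<mu> L\<^sup>T L) x\<close>; the minima in \<open>c\<close> are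
  positive because, by the maximum principle for the stochastic matrix \<open>W\<^sub>b\<^sub>a\<^sub>r\<close>, the kernel of
  \<open>L\<close> consists of constant vectors on a rooted digraph and so meets the kernel of \<open>A\<close> trivially.
  On the other side, every eigenvalue of \<open>M\<close> is one of \<open>S M S\<^sup>-\<^sup>1\<close>, so by Gershgorin its real
  part is at least \<open>g = \<lambda>\<^sup>-\<^sub>m\<^sub>i\<^sub>n(S M S\<^sup>-\<^sup>1) \<ge> 0\<close>, and the diagonalization \<open>M = P \<Lambda> P\<^sup>-\<^sup>1\<close>
  gives \<open>g\<^sup>2 \<parallel>x\<parallel>\<^sup>2 \<le> \<gamma>(P) \<parallel>M x\<parallel>\<^sup>2\<close>. Evaluating both at an eigenvector of
  \<open>A + \<mu> L\<^sup>T L\<close> for its smallest eigenvalue and using \<open>1 \<le> \<gamma>(P\<^sub>A) \<le> \<gamma>\<^sub>m\<^sub>a\<^sub>x\<close> proves the claim.\<close>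

subsection \<open>Self-adjoint operators and symmetric matrices\<close>

lemma linear_coeff_zero_if_quadratic_nonneg:
  fixes a b :: real
  assumes nonneg: "\<And>t. 0 \<le> 2 * t * a + t^2 * b"
  shows "a = 0"
proof (rule ccontr)
  assume "a \<noteq> 0"
  define c where "c = \<bar>b\<bar> + 1"
  have c: "0 < c"
    by (simp add: c_def add_nonneg_pos)
  define t where "t = - a / c"
  have "2 * t * a + t^2 * b \<le> 2 * t * a + t^2 * c"
    by (intro add_left_mono mult_left_mono) (auto simp: c_def)
  also have "\<dots> = - (a^2) / c"
  proof -
    have "t^2 * c = a^2 / c" "2 * t * a = - 2 * a^2 / c"
      using c by (simp_all add: t_def power2_eq_square)
    then show ?thesis
      by (simp add: add_divide_distrib[symmetric])
  qed
  also have "\<dots> < 0"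
    using \<open>a \<noteq> 0\<close> c by simp
  finally show False
    using nonneg[of t] by linarith
qed

lemma rayleigh_quotient_attains_min:
  fixes T :: "'a::euclidean_space \<Rightarrow> 'a"
  assumes "linear T"
  obtains x0 where "x0 \<bullet> x0 = 1" and "\<And>x. (x0 \<bullet> T x0) * (x \<bullet> x) \<le> x \<bullet> T x"
proof -
  interpret T: bounded_linear T
    using assms linear_conv_bounded_linear by blast
  have cont: "continuous_on (sphere 0 1) (\<lambda>x. x \<bullet> T x)"
    by (intro continuous_intros T.continuous_on)
  obtain b :: 'a where "b \<in> Basis"
    using nonempty_Basis by blast
  then have "sphere (0::'a) 1 \<noteq> {}"
    by (auto intro!: exI[of _ b])
  then obtain x0 where x0: "x0 \<in> sphere 0 1"
    and x0_min: "\<And>y. y \<in> sphere 0 1 \<Longrightarrow> x0 \<bullet> T x0 \<le> y \<bullet> T y"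
    using continuous_attains_inf[OF compact_sphere _ cont] by blast
  have "(x0 \<bullet> T x0) * (x \<bullet> x) \<le> x \<bullet> T x" for x
  proof (cases "x = 0")
    case True
    then show ?thesis by (simp add: T.zero)
  next
    case False
    have "x0 \<bullet> T x0 \<le> (x /\<^sub>R norm x) \<bullet> T (x /\<^sub>R norm x)"
      using False x0_min[of "x /\<^sub>R norm x"] by simp
    also have "\<dots> = (x \<bullet> T x) / (norm x)^2"
      using False by (simp add: T.scaleR power2_eq_square field_simps)
    finally show ?thesis
      using False by (simp add: field_simps dot_square_norm)
  qed
  moreover have "x0 \<bullet> x0 = 1"
    using x0 by (simp add: dot_square_norm)
  ultimately show ?thesis
    using that by blast
qed

lemma selfadjoint_min_eigenvalue_exists:
  fixes T :: "'a::euclidean_space \<Rightarrow> 'a"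
  assumes lin: "linear T" and sa: "\<And>x y. T x \<bullet> y = x \<bullet> T y"
  shows "\<exists>q x0. x0 \<noteq> 0 \<and> T x0 = q *\<^sub>R x0 \<and> (\<forall>x. q * (x \<bullet> x) \<le> x \<bullet> T x)"
proof -
  interpret T: linear T
    by (rule lin)
  obtain x0 where x0_unit: "x0 \<bullet> x0 = 1" and rayleigh: "\<And>x. (x0 \<bullet> T x0) * (x \<bullet> x) \<le> x \<bullet> T x"
    using rayleigh_quotient_attains_min[OF lin] by blast
  define q where "q = x0 \<bullet> T x0"
  \<comment> \<open>First-order condition at the minimiser: expand the Rayleigh bound along x0 + t y.\<close>
  have "(T x0 - q *\<^sub>R x0) \<bullet> y = 0" for y
  proof (rule linear_coeff_zero_if_quadratic_nonneg)
    fix t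
    have "q * ((x0 + t *\<^sub>R y) \<bullet> (x0 + t *\<^sub>R y)) \<le> (x0 + t *\<^sub>R y) \<bullet> T (x0 + t *\<^sub>R y)"
      unfolding q_def by (rule rayleigh)
    moreover have "x0 \<bullet> T y = T x0 \<bullet> y"
      using sa[of x0 y] by simp
    moreover have "y \<bullet> x0 = x0 \<bullet> y" "y \<bullet> T x0 = T x0 \<bullet> y"
      by (simp_all add: inner_commute)
    ultimately show "0 \<le> 2 * t * ((T x0 - q *\<^sub>R x0) \<bullet> y) + t^2 * (y \<bullet> T y - q * (y \<bullet> y))"
      by (simp add: T.add T.scale inner_add_left inner_add_right inner_diff_left
          algebra_simps power2_eq_square x0_unit q_def)
  qed
  from this[of "T x0 - q *\<^sub>R x0"] have "T x0 = q *\<^sub>R x0"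
    by simp
  moreover have "x0 \<noteq> 0"
    using x0_unit by auto
  ultimately show ?thesis
    using rayleigh unfolding q_def by blast
qed

lemma selfadjoint_eigenvalues_finite:
  fixes T :: "'a::euclidean_space \<Rightarrow> 'a"
  assumes sa: "\<And>x y. T x \<bullet> y = x \<bullet> T y"
  shows "finite {l. \<exists>v. v \<noteq> 0 \<and> T v = l *\<^sub>R v}"
proof -
  define E where "E = {l. \<exists>v. v \<noteq> 0 \<and> T v = l *\<^sub>R v}"
  define f where "f l = (SOME v. v \<noteq> 0 \<and> T v = l *\<^sub>R v)" for l
  have f: "f l \<noteq> 0 \<and> T (f l) = l *\<^sub>R f l" if "l \<in> E" for l
    using that unfolding E_def f_def by (metis (mono_tags, lifting) mem_Collect_eq someI_ex)
  have orth: "f l \<bullet> f l' = 0" if "l \<in> E" "l' \<in> E" "l \<noteq> l'" for l l'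
  proof -
    have "l * (f l \<bullet> f l') = T (f l) \<bullet> f l'"
      using f[OF that(1)] by simp
    also have "\<dots> = f l \<bullet> T (f l')"
      by (rule sa)
    also have "\<dots> = l' * (f l \<bullet> f l')"
      using f[OF that(2)] by simp
    finally show ?thesis
      using that(3) by auto
  qed
  have "inj_on f E"
  proof (rule inj_onI)
    fix l l'
    assume "l \<in> E" "l' \<in> E" "f l = f l'"
    then show "l = l'"
      using orth[of l l'] f[of l] by auto
  qed
  moreover have "independent (f ` E)"
  proof (rule pairwise_orthogonal_independent)
    show "pairwise orthogonal (f ` E)"
      unfolding pairwise_def orthogonal_def using orth by (metis imageE)
    show "0 \<notin> f ` E"
      using f by auto
  qed
  ultimately have "finite E"
    using independent_imp_finite finite_imageD by blast
  then show ?thesis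
    by (simp add: E_def)
qed

lemma selfadjoint_Min_eigenvalue:
  fixes T :: "'a::euclidean_space \<Rightarrow> 'a"
  assumes lin: "linear T" and sa: "\<And>x y. T x \<bullet> y = x \<bullet> T y"
  defines "E \<equiv> {l. \<exists>v. v \<noteq> 0 \<and> T v = l *\<^sub>R v}"
  shows "Min E \<in> E" and "Min E * (x \<bullet> x) \<le> x \<bullet> T x"
proof -
  obtain q x0 where x0: "x0 \<noteq> 0" "T x0 = q *\<^sub>R x0"
    and rayleigh: "\<And>x. q * (x \<bullet> x) \<le> x \<bullet> T x"
    using selfadjoint_min_eigenvalue_exists[OF lin sa] by blast
  have "Min E = q"
  proof (rule Min_eqI)
    show "finite E"
      unfolding E_def by (rule selfadjoint_eigenvalues_finite[OF sa])
    show "q \<in> E"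
      using x0 by (auto simp: E_def)
    fix l
    assume "l \<in> E"
    then obtain v where "v \<noteq> 0" "T v = l *\<^sub>R v"
      by (auto simp: E_def)
    then show "q \<le> l"
      using rayleigh[of v] by simp
  qed
  then show "Min E \<in> E" "Min E * (x \<bullet> x) \<le> x \<bullet> T x"
    using x0 rayleigh by (auto simp: E_def)
qed

lemma selfadjoint_Max_eigenvalue:
  fixes T :: "'a::euclidean_space \<Rightarrow> 'a"
  assumes lin: "linear T" and sa: "\<And>x y. T x \<bullet> y = x \<bullet> T y"
  defines "E \<equiv> {l. \<exists>v. v \<noteq> 0 \<and> T v = l *\<^sub>R v}"
  shows "x \<bullet> T x \<le> Max E * (x \<bullet> x)"
proof -
  define E' where "E' = {l. \<exists>v. v \<noteq> 0 \<and> - T v = l *\<^sub>R v}"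
  have lin': "linear (\<lambda>x. - T x)" and sa': "\<And>x y. - T x \<bullet> y = x \<bullet> - T y"
    using lin sa by (simp_all add: linear_compose_neg)
  have "Max E = - Min E'"
  proof (rule Max_eqI)
    show "finite E"
      unfolding E_def by (rule selfadjoint_eigenvalues_finite[OF sa])
    obtain v where "v \<noteq> 0" "- T v = Min E' *\<^sub>R v"
      using selfadjoint_Min_eigenvalue(1)[OF lin' sa'] unfolding E'_def by blast
    then have "v \<noteq> 0 \<and> T v = (- Min E') *\<^sub>R v"
      by (simp add: minus_equation_iff[of "T v"])
    then show "- Min E' \<in> E"
      unfolding E_def by blast
    fix l
    assume "l \<in> E"
    then have "- l \<in> E'"
      by (auto simp: E_def E'_def)
    moreover have "finite E'"
      unfolding E'_def by (rule selfadjoint_eigenvalues_finite[OF sa'])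
    ultimately have "Min E' \<le> - l"
      by (rule Min_le[rotated])
    then show "l \<le> - Min E'"
      by linarith
  qed
  moreover have "Min E' * (x \<bullet> x) \<le> - (x \<bullet> T x)"
    using selfadjoint_Min_eigenvalue(2)[OF lin' sa', of x] unfolding E'_def by simp
  ultimately show ?thesis
    by (metis le_minus_iff mult_minus_left)
qed

lemma symmetric_matrix_selfadjoint:
  fixes X :: "real^'n^'n"
  assumes "transpose X = X"
  shows "(X *v x) \<bullet> y = x \<bullet> (X *v y)"
  by (metis assms dot_lmul_matrix inner_commute transpose_matrix_vector)

lemma lam_min_eq_Min_eigenvalues:
  "lam_min X = Min {l. \<exists>v. v \<noteq> 0 \<and> X *v v = l *\<^sub>R v}"
  by (simp add: lam_min_def scalar_mult_eq_scaleR)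

lemma lam_min_eigenvector:
  fixes X :: "real^'n^'n"
  assumes "transpose X = X"
  obtains v where "v \<noteq> 0" "X *v v = lam_min X *\<^sub>R v"
  using selfadjoint_Min_eigenvalue(1)[OF matrix_vector_mul_linear symmetric_matrix_selfadjoint[OF assms]]
  unfolding lam_min_eq_Min_eigenvalues by blast

lemma lam_min_le_rayleigh:
  fixes X :: "real^'n^'n"
  assumes "transpose X = X"
  shows "lam_min X * (x \<bullet> x) \<le> x \<bullet> (X *v x)"
  using selfadjoint_Min_eigenvalue(2)[OF matrix_vector_mul_linear symmetric_matrix_selfadjoint[OF assms]]
  unfolding lam_min_eq_Min_eigenvalues .

lemma lam_min_pos:
  fixes X :: "real^'n^'n"
  assumes sym: "transpose X = X" and posdef: "\<And>v. v \<noteq> 0 \<Longrightarrow> 0 < v \<bullet> (X *v v)"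
  shows "0 < lam_min X"
proof -
  obtain v where v: "v \<noteq> 0" "X *v v = lam_min X *\<^sub>R v"
    using lam_min_eigenvector[OF sym] by blast
  have "0 < v \<bullet> (X *v v)"
    using posdef v(1) by blast
  also have "\<dots> = lam_min X * (v \<bullet> v)"
    using v(2) by simp
  finally show ?thesis
    using v(1) by (metis inner_gt_zero_iff zero_less_mult_pos2)
qed

lemma quadratic_form_transpose_mult:
  fixes L :: "real^'n^'n"
  shows "x \<bullet> ((transpose L ** L) *v x) = (L *v x) \<bullet> (L *v x)"
  by (metis dot_lmul_matrix inner_commute matrix_vector_mul_assoc transpose_matrix_vector)

lemma invertible_matrix_inv_mult:
  fixes P :: "'a::semiring_1^'n^'n"
  assumes "invertible P"
  shows "P ** matrix_inv P = mat 1" and "matrix_inv P ** P = mat 1"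
  using someI_ex[OF assms[unfolded invertible_def]] by (simp_all add: matrix_inv_def)

lemma invertible_mult_vec_nonzero:
  fixes P :: "'a::semiring_1^'n^'n"
  assumes "invertible P" and "z \<noteq> 0"
  shows "P *v z \<noteq> 0"
proof
  assume "P *v z = 0"
  then have "matrix_inv P *v (P *v z) = 0"
    by simp
  then show False
    using assms by (simp add: matrix_vector_mul_assoc invertible_matrix_inv_mult)
qed

lemma is_diag_mult_vec:
  fixes D :: "'a::semiring_1^'n^'n"
  assumes "is_diag D"
  shows "(D *v x) $ i = D $ i $ i * x $ i"
proof -
  have "(D *v x) $ i = (\<Sum>k\<in>UNIV. D $ i $ k * x $ k)"
    by (simp add: matrix_vector_mult_def)
  also have "\<dots> = D $ i $ i * x $ i"
    using assms unfolding is_diag_def by (subst sum.remove[of UNIV i]) (auto intro!: sum.neutral)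
  finally show ?thesis .
qed

lemma invertible_positive_diagonal:
  fixes S :: "real^'n^'n"
  assumes "is_diag S" and "\<And>i. 0 < S $ i $ i"
  shows "invertible S"
  using assms by (simp add: invertible_det_nz det_diagonal is_diag_def less_imp_neq[symmetric])

lemma transpose_add: "transpose (X + Y) = transpose X + transpose (Y::'a::semiring_1^'n^'n)"
  by (simp add: transpose_def vec_eq_iff)

lemma quadratic_form_add_scaleR:
  fixes X Y :: "real^'n^'n"
  shows "x \<bullet> ((X + c *\<^sub>R Y) *v x) = x \<bullet> (X *v x) + c * (x \<bullet> (Y *v x))"
  by (simp add: matrix_vector_mult_add_rdistrib scaleR_matrix_vector_assoc[symmetric] inner_add_right)

lemma Min_lam_min_le_rayleigh:
  fixes f :: "'a \<Rightarrow> real^'n^'n"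
  assumes "finite F" and "B \<in> F" and "\<And>B. B \<in> F \<Longrightarrow> transpose (f B) = f B"
  shows "Min ((\<lambda>B. lam_min (f B)) ` F) * (x \<bullet> x) \<le> x \<bullet> (f B *v x)"
proof -
  have "Min ((\<lambda>B. lam_min (f B)) ` F) \<le> lam_min (f B)"
    using assms by (intro Min_le) auto
  then have "Min ((\<lambda>B. lam_min (f B)) ` F) * (x \<bullet> x) \<le> lam_min (f B) * (x \<bullet> x)"
    by (simp add: mult_right_mono)
  also have "\<dots> \<le> x \<bullet> (f B *v x)"
    using assms by (intro lam_min_le_rayleigh) auto
  finally show ?thesis .
qed

lemma Min_lam_min_pos:
  fixes f :: "'a \<Rightarrow> real^'n^'n"
  assumes "finite F" and "F \<noteq> {}" and "\<And>B. B \<in> F \<Longrightarrow> transpose (f B) = f B"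
    and "\<And>B v. B \<in> F \<Longrightarrow> v \<noteq> 0 \<Longrightarrow> 0 < v \<bullet> (f B *v v)"
  shows "0 < Min ((\<lambda>B. lam_min (f B)) ` F)"
proof -
  have "0 < lam_min (f B)" if "B \<in> F" for B
    using assms(3,4) that by (intro lam_min_pos) auto
  then show ?thesis
    using assms(1,2) by simp
qed

subsection \<open>Complex matrices and the Gram matrix\<close>

lemma conj_transpose_adjoint:
  fixes P :: "complex^'n^'n"
  shows "(P *v y) \<bullet> w = y \<bullet> (conj_transpose P *v w)"
proof -
  have cnj_shift: "(a * b) \<bullet> c = b \<bullet> (cnj a * c)" for a b c :: complex
    by (simp add: inner_complex_def algebra_simps)
  have "(P *v y) \<bullet> w = (\<Sum>i\<in>UNIV. \<Sum>j\<in>UNIV. (P $ i $ j * y $ j) \<bullet> w $ i)"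
    by (simp add: inner_vec_def matrix_vector_mult_def inner_sum_left)
  also have "\<dots> = (\<Sum>j\<in>UNIV. \<Sum>i\<in>UNIV. y $ j \<bullet> (cnj (P $ i $ j) * w $ i))"
    by (subst sum.swap) (simp add: cnj_shift)
  also have "\<dots> = y \<bullet> (conj_transpose P *v w)"
    by (simp add: inner_vec_def matrix_vector_mult_def inner_sum_right conj_transpose_def)
  finally show ?thesis .
qed

lemma gram_matrix_rayleigh:
  fixes P :: "complex^'n^'n"
  shows "z \<bullet> ((conj_transpose P ** P) *v z) = (P *v z) \<bullet> (P *v z)"
  by (simp add: conj_transpose_adjoint matrix_vector_mul_assoc[symmetric] inner_commute)

lemma gram_matrix_selfadjoint:
  fixes P :: "complex^'n^'n"
  shows "((conj_transpose P ** P) *v x) \<bullet> y = x \<bullet> ((conj_transpose P ** P) *v y)"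
proof -
  have "((conj_transpose P ** P) *v x) \<bullet> y = y \<bullet> (conj_transpose P *v (P *v x))"
    by (simp add: matrix_vector_mul_assoc[symmetric] inner_commute)
  also have "\<dots> = (P *v y) \<bullet> (P *v x)"
    by (simp add: conj_transpose_adjoint)
  also have "\<dots> = x \<bullet> ((conj_transpose P ** P) *v y)"
    by (simp add: matrix_vector_mul_assoc[symmetric] inner_commute conj_transpose_adjoint)
  finally show ?thesis .
qed

lemma c_real_eigs_eq:
  fixes H :: "complex^'n^'n"
  shows "c_real_eigs H = {l. \<exists>v. v \<noteq> 0 \<and> H *v v = l *\<^sub>R v}"
proof -
  have "complex_of_real l *s v = l *\<^sub>R v" for l and v :: "complex^'n"
    unfolding vec_eq_iff by (simp only: vector_scaleR_component) (simp add: scaleR_conv_of_real)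
  then show ?thesis
    by (simp add: c_real_eigs_def)
qed

lemma lam_min_c_gram_le:
  fixes P :: "complex^'n^'n"
  shows "lam_min_c (conj_transpose P ** P) * (z \<bullet> z) \<le> (P *v z) \<bullet> (P *v z)"
  using selfadjoint_Min_eigenvalue(2)[OF matrix_vector_mul_linear gram_matrix_selfadjoint]
  by (simp add: lam_min_c_def c_real_eigs_eq gram_matrix_rayleigh)

lemma lam_max_c_gram_ge:
  fixes P :: "complex^'n^'n"
  shows "(P *v z) \<bullet> (P *v z) \<le> lam_max_c (conj_transpose P ** P) * (z \<bullet> z)"
  using selfadjoint_Max_eigenvalue[OF matrix_vector_mul_linear gram_matrix_selfadjoint]
  by (simp add: lam_max_c_def c_real_eigs_eq gram_matrix_rayleigh)

lemma lam_min_c_gram_pos: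
  fixes P :: "complex^'n^'n"
  assumes "invertible P"
  shows "0 < lam_min_c (conj_transpose P ** P)"
proof -
  obtain v where v: "v \<noteq> 0" "(conj_transpose P ** P) *v v = lam_min_c (conj_transpose P ** P) *\<^sub>R v"
    using selfadjoint_Min_eigenvalue(1)[OF matrix_vector_mul_linear gram_matrix_selfadjoint]
    by (auto simp: lam_min_c_def c_real_eigs_eq)
  have "0 < (P *v v) \<bullet> (P *v v)"
    using invertible_mult_vec_nonzero[OF assms v(1)] by simp
  also have "\<dots> = lam_min_c (conj_transpose P ** P) * (v \<bullet> v)"
    using v(2) gram_matrix_rayleigh[of v P] by simp
  finally show ?thesis
    using v(1) by (metis inner_gt_zero_iff zero_less_mult_pos2)
qed

lemma gamma_ge_1:
  fixes P :: "complex^'n^'n"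
  assumes "invertible P"
  shows "1 \<le> gamma P"
proof -
  define z :: "complex^'n" where "z = axis undefined 1"
  have "z \<noteq> 0"
    by (simp add: z_def)
  then have "0 < z \<bullet> z"
    by simp
  moreover have "lam_min_c (conj_transpose P ** P) * (z \<bullet> z) \<le> lam_max_c (conj_transpose P ** P) * (z \<bullet> z)"
    using lam_min_c_gram_le[of P z] lam_max_c_gram_ge[of P z] by (rule order_trans)
  ultimately have "lam_min_c (conj_transpose P ** P) \<le> lam_max_c (conj_transpose P ** P)"
    by simp
  then show ?thesis
    using lam_min_c_gram_pos[OF assms] by (simp add: gamma_def)
qed

subsection \<open>Eigenvalue localisation\<close>

lemma lam_minus_min_le_Re_eigenvalue:
  fixes N :: "real^'n^'n" and w :: "complex^'n"
  assumes w: "w \<noteq> 0" and eigen: "cmat N *v w = lam *s w"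
  shows "lam_minus_min N \<le> Re lam"
proof -
  have "Max (range (\<lambda>j. norm (w $ j))) \<in> range (\<lambda>j. norm (w $ j))"
    by (intro Max_in) auto
  then obtain i where i: "norm (w $ i) = Max (range (\<lambda>j. norm (w $ j)))"
    by (metis (no_types, lifting) imageE)
  have i_max: "norm (w $ j) \<le> norm (w $ i)" for j
    unfolding i by (intro Max_ge) auto
  obtain j0 where "w $ j0 \<noteq> 0"
    using w by (auto simp: vec_eq_iff)
  then have "0 < norm (w $ j0)"
    by simp
  then have wi: "0 < norm (w $ i)"
    using i_max[of j0] by linarith
  define R where "R = (\<Sum>j\<in>UNIV - {i}. \<bar>N $ i $ j\<bar>)"
  have "(\<Sum>j\<in>UNIV. complex_of_real (N $ i $ j) * w $ j) = lam * w $ i"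
    using arg_cong[OF eigen, of "\<lambda>v. v $ i"] by (simp add: cmat_def matrix_vector_mult_def)
  then have row: "(lam - complex_of_real (N $ i $ i)) * w $ i
      = (\<Sum>j\<in>UNIV - {i}. complex_of_real (N $ i $ j) * w $ j)"
    by (subst (asm) sum.remove[of UNIV i]) (auto simp: algebra_simps)
  have "norm (lam - complex_of_real (N $ i $ i)) * norm (w $ i)
      \<le> (\<Sum>j\<in>UNIV - {i}. \<bar>N $ i $ j\<bar> * norm (w $ j))"
    unfolding norm_mult[symmetric] row by (rule order_trans[OF norm_sum]) (simp add: norm_mult)
  also have "\<dots> \<le> R * norm (w $ i)"
    unfolding R_def sum_distrib_right by (intro sum_mono mult_left_mono i_max) auto
  finally have "norm (lam - complex_of_real (N $ i $ i)) \<le> R"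
    using wi by simp
  moreover have "- norm (lam - complex_of_real (N $ i $ i)) \<le> Re lam - N $ i $ i"
    using abs_Re_le_cmod[of "lam - complex_of_real (N $ i $ i)"] by simp
  moreover have "lam_minus_min N \<le> N $ i $ i - R"
    unfolding lam_minus_min_def R_def by (intro Min_le) auto
  ultimately show ?thesis
    by linarith
qed

lemma cmat_mult: "cmat (X ** Y) = cmat X ** cmat (Y::real^'n^'n)"
  by (simp add: vec_eq_iff matrix_matrix_mult_def cmat_def)

lemma cmat_mat_1: "cmat (mat 1 :: real^'n^'n) = mat 1"
  by (simp add: vec_eq_iff mat_def cmat_def)

lemma lam_minus_min_similar_le_Re_eigenvalue:
  fixes M S :: "real^'n^'n" and w :: "complex^'n"
  assumes S: "invertible S" and w: "w \<noteq> 0" and eigen: "cmat M *v w = lam *s w"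
  shows "lam_minus_min (S ** M ** matrix_inv S) \<le> Re lam"
proof (rule lam_minus_min_le_Re_eigenvalue)
  have "cmat (matrix_inv S) *v (cmat S *v w) = w"
    by (simp add: matrix_vector_mul_assoc cmat_mult[symmetric] invertible_matrix_inv_mult[OF S] cmat_mat_1)
  then show "cmat S *v w \<noteq> 0"
    using w by auto
  then show "cmat (S ** M ** matrix_inv S) *v (cmat S *v w) = lam *s (cmat S *v w)"
    using \<open>cmat (matrix_inv S) *v (cmat S *v w) = w\<close>
    by (simp add: cmat_mult matrix_vector_mul_assoc[symmetric] eigen vector_scalar_commute)
qed

definition cvec :: "real^'n \<Rightarrow> complex^'n" where
  "cvec x = (\<chi> i. complex_of_real (x $ i))"

lemma cvec_inner: "cvec x \<bullet> cvec y = x \<bullet> y"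
  by (simp add: cvec_def inner_vec_def inner_complex_def)

lemma cmat_mult_cvec: "cmat M *v cvec x = cvec (M *v x)"
  by (simp add: cvec_def cmat_def matrix_vector_mult_def vec_eq_iff)

lemma diagonal_norm_lower_bound:
  fixes Lam :: "complex^'n^'n"
  assumes "is_diag Lam" and "0 \<le> g" and "\<And>j. g \<le> norm (Lam $ j $ j)"
  shows "g^2 * (y \<bullet> y) \<le> (Lam *v y) \<bullet> (Lam *v y)"
proof -
  have "g^2 * (y $ j \<bullet> y $ j) \<le> (Lam *v y) $ j \<bullet> (Lam *v y) $ j" for j
    using assms
    by (simp add: is_diag_mult_vec dot_square_norm norm_mult power_mult_distrib mult_right_mono power_mono)
  then show ?thesis
    unfolding inner_vec_def sum_distrib_left by (rule sum_mono)
qed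

lemma diagonalization_intertwines:
  fixes P Lam :: "complex^'n^'n" and M :: "real^'n^'n"
  assumes P: "invertible P" and M: "cmat M = P ** Lam ** matrix_inv P"
  shows "cmat M ** P = P ** Lam"
  by (metis M matrix_mul_assoc invertible_matrix_inv_mult(2)[OF P] matrix_mul_rid)

lemma diagonalization_eigenvector:
  fixes P Lam :: "complex^'n^'n" and M :: "real^'n^'n"
  assumes P: "invertible P" and Lam: "is_diag Lam" and M: "cmat M = P ** Lam ** matrix_inv P"
  shows "cmat M *v (P *v axis j 1) = Lam $ j $ j *s (P *v axis j 1)"
proof -
  have "Lam *v axis j 1 = Lam $ j $ j *s axis j 1"
    by (simp add: vec_eq_iff is_diag_mult_vec[OF Lam] axis_def)
  then show ?thesis
    by (metis diagonalization_intertwines[OF P M] matrix_vector_mul_assoc vector_scalar_commute)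
qed

lemma diagonalization_eigenvalue_norm_ge:
  fixes P Lam :: "complex^'n^'n" and M :: "real^'n^'n"
  assumes P: "invertible P" and Lam: "is_diag Lam" and M: "cmat M = P ** Lam ** matrix_inv P"
    and Re_ge: "\<And>w lam. w \<noteq> 0 \<Longrightarrow> cmat M *v w = lam *s w \<Longrightarrow> g \<le> Re lam"
  shows "g \<le> norm (Lam $ j $ j)"
proof -
  have "axis j (1::complex) \<noteq> 0"
    by simp
  then have "g \<le> Re (Lam $ j $ j)"
    by (rule Re_ge[OF invertible_mult_vec_nonzero[OF P] diagonalization_eigenvector[OF P Lam M]])
  then show ?thesis
    using complex_Re_le_cmod order_trans by blast
qed

lemma diagonalizable_norm_lower_bound:
  fixes P Lam :: "complex^'n^'n" and M :: "real^'n^'n"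
  assumes P: "invertible P" and Lam: "is_diag Lam" and M: "cmat M = P ** Lam ** matrix_inv P"
    and g: "0 \<le> g" and Re_ge: "\<And>w lam. w \<noteq> 0 \<Longrightarrow> cmat M *v w = lam *s w \<Longrightarrow> g \<le> Re lam"
  shows "g^2 * (x \<bullet> x) \<le> gamma P * ((M *v x) \<bullet> (M *v x))"
proof -
  define lmin where "lmin = lam_min_c (conj_transpose P ** P)"
  define lmax where "lmax = lam_max_c (conj_transpose P ** P)"
  have lmin: "0 < lmin"
    unfolding lmin_def using lam_min_c_gram_pos[OF P] .
  have "g \<le> norm (Lam $ j $ j)" for j
    using P Lam M Re_ge by (rule diagonalization_eigenvalue_norm_ge)
  then have Lam_bound: "g^2 * (y \<bullet> y) \<le> (Lam *v y) \<bullet> (Lam *v y)" for y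
    using diagonal_norm_lower_bound[OF Lam g] by blast
  \<comment> \<open>With \<open>x = P y\<close>: \<open>\<parallel>x\<parallel>\<^sup>2 \<le> \<lambda>\<^sub>m\<^sub>a\<^sub>x \<parallel>y\<parallel>\<^sup>2\<close> and \<open>\<lambda>\<^sub>m\<^sub>i\<^sub>n \<parallel>\<Lambda> y\<parallel>\<^sup>2 \<le> \<parallel>P \<Lambda> y\<parallel>\<^sup>2 = \<parallel>M x\<parallel>\<^sup>2\<close>.\<close>
  define y where "y = matrix_inv P *v cvec x"
  have Py: "P *v y = cvec x"
    by (simp add: y_def matrix_vector_mul_assoc invertible_matrix_inv_mult[OF P])
  have "cvec (M *v x) = P *v (Lam *v y)"
    by (metis Py cmat_mult_cvec diagonalization_intertwines[OF P M] matrix_vector_mul_assoc)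
  then have Mx: "lmin * ((Lam *v y) \<bullet> (Lam *v y)) \<le> (M *v x) \<bullet> (M *v x)"
    using lam_min_c_gram_le[of P "Lam *v y"] by (simp add: lmin_def cvec_inner[symmetric])
  have y_bound: "lmin * (g^2 * (y \<bullet> y)) \<le> (M *v x) \<bullet> (M *v x)"
    using mult_left_mono[OF Lam_bound[of y]] lmin Mx by (meson less_imp_le order_trans)
  have gamma: "gamma P = lmax / lmin"
    by (simp add: gamma_def lmin_def lmax_def)
  have "x \<bullet> x \<le> lmax * (y \<bullet> y)"
    using lam_max_c_gram_ge[of P y] by (simp add: Py lmax_def cvec_inner)
  then have "g^2 * (x \<bullet> x) \<le> g^2 * (lmax * (y \<bullet> y))"
    by (simp add: mult_left_mono)
  also have "\<dots> = (lmax / lmin) * (lmin * (g^2 * (y \<bullet> y)))"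
    using lmin by simp
  also have "\<dots> \<le> gamma P * ((M *v x) \<bullet> (M *v x))"
    unfolding gamma by (rule mult_left_mono[OF y_bound]) (use gamma_ge_1[OF P] gamma in simp)
  finally show ?thesis .
qed

subsection \<open>Selection matrices\<close>

lemma AK_diag_entry: "B \<in> AK K \<Longrightarrow> B $ i $ i = 0 \<or> B $ i $ i = 1"
  by (simp add: AK_def)

lemma AK_mult_vec: "B \<in> AK K \<Longrightarrow> (B *v x) $ i = B $ i $ i * x $ i"
  by (simp add: AK_def is_diag_mult_vec)

lemma AK_card_ones:
  assumes B: "B \<in> AK K"
  shows "card {i. B $ i $ i = 1} = K"
proof -
  have "real K = (\<Sum>i\<in>UNIV. B $ i $ i)"
    using B by (simp add: AK_def trace_def)
  also have "\<dots> = (\<Sum>i\<in>UNIV. if i \<in> {i. B $ i $ i = 1} then 1 else 0)"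
    by (rule sum.cong) (use AK_diag_entry[OF B] in auto)
  also have "\<dots> = real (card {i. B $ i $ i = 1})"
    by (simp add: sum.If_cases)
  finally show ?thesis
    by simp
qed

lemma AK_transpose:
  assumes "B \<in> AK K"
  shows "transpose B = B"
proof -
  have "B $ j $ i = B $ i $ j" for i j
    using assms by (cases "i = j") (auto simp: AK_def is_diag_def)
  then show ?thesis
    by (simp add: transpose_def vec_eq_iff)
qed

lemma AK_finite: "finite (AK K :: (real^'n^'n) set)"
proof -
  define diag_of :: "'n set \<Rightarrow> real^'n^'n"
    where "diag_of I = (\<chi> i j. if i = j \<and> i \<in> I then 1 else 0)" for I
  have diag_eq: "B = diag_of {k. B $ k $ k = 1}" if B: "B \<in> AK K" for B
  proof -
    have "B $ i $ j = diag_of {k. B $ k $ k = 1} $ i $ j" for i j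
    proof (cases "i = j")
      case True
      then show ?thesis
        using AK_diag_entry[OF B, of i] by (auto simp: diag_of_def)
    next
      case False
      then show ?thesis
        using B by (simp add: AK_def is_diag_def diag_of_def)
    qed
    then show ?thesis
      unfolding vec_eq_iff by blast
  qed
  have "AK K \<subseteq> range diag_of"
  proof
    fix B :: "real^'n^'n"
    assume "B \<in> AK K"
    then have "B = diag_of {k. B $ k $ k = 1}"
      by (rule diag_eq)
    then show "B \<in> range diag_of"
      by (rule range_eqI)
  qed
  then show ?thesis
    by (rule finite_subset) simp
qed

lemma AK_quadratic_form:
  assumes "B \<in> AK K"
  shows "x \<bullet> (B *v x) = (B *v x) \<bullet> (B *v x)"
proof -
  have diag: "x $ i * (B $ i $ i * x $ i) = (B $ i $ i * x $ i) * (B $ i $ i * x $ i)" for i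
    using AK_diag_entry[OF assms, of i] by auto
  show ?thesis
    unfolding inner_vec_def AK_mult_vec[OF assms] inner_real_def diag ..
qed

subsection \<open>The random-walk Laplacian of a rooted digraph\<close>

lemma stochastic_harmonic_max_propagates:
  fixes Q :: "real^'n^'n" and v :: "real^'n"
  assumes nonneg: "\<And>i j. 0 \<le> Q $ i $ j" and rows: "\<And>i. (\<Sum>j\<in>UNIV. Q $ i $ j) = 1"
    and harmonic: "Q *v v = v"
    and path: "(u, r) \<in> {(i, j). 0 < Q $ i $ j}\<^sup>*"
    and max_u: "v $ u = Max (range (($) v))"
  shows "v $ r = Max (range (($) v))"
  using path
proof (induction rule: rtrancl_induct)
  case base
  then show ?case by (rule max_u)
next
  case (step y z)
  define m where "m = Max (range (($) v))"
  have le_m: "v $ j \<le> m" for j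
    unfolding m_def by (intro Max_ge) auto
  have "(\<Sum>j\<in>UNIV. Q $ y $ j * (m - v $ j)) = m * (\<Sum>j\<in>UNIV. Q $ y $ j) - (Q *v v) $ y"
    by (simp add: matrix_vector_mult_def algebra_simps sum_subtractf sum_distrib_left)
  also have "\<dots> = 0"
    using rows harmonic step.IH by (simp add: m_def)
  finally have "Q $ y $ z * (m - v $ z) = 0"
    using sum_nonneg_eq_0_iff[of UNIV "\<lambda>j. Q $ y $ j * (m - v $ j)"] nonneg le_m by simp
  moreover have "0 < Q $ y $ z"
    using step.hyps(2) by simp
  ultimately show ?case
    unfolding m_def[symmetric] by simp
qed

lemma stochastic_harmonic_constant:
  fixes Q :: "real^'n^'n" and v :: "real^'n"
  assumes nonneg: "\<And>i j. 0 \<le> Q $ i $ j" and rows: "\<And>i. (\<Sum>j\<in>UNIV. Q $ i $ j) = 1"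
    and harmonic: "Q *v v = v"
    and root: "\<And>u. (u, r) \<in> {(i, j). 0 < Q $ i $ j}\<^sup>*"
  shows "v $ u = v $ r"
proof -
  have le_root: "w $ u \<le> w $ r" if "Q *v w = w" for w
  proof -
    have "Max (range (($) w)) \<in> range (($) w)"
      by (intro Max_in) auto
    then obtain u0 where "w $ u0 = Max (range (($) w))"
      by (metis (no_types, lifting) imageE)
    then have "w $ r = Max (range (($) w))"
      by (rule stochastic_harmonic_max_propagates[OF nonneg rows that root])
    moreover have "w $ u \<le> Max (range (($) w))"
      by (intro Max_ge) auto
    ultimately show ?thesis
      by simp
  qed
  have "Q *v (- v) = - v"
    by (simp add: linear_neg[OF matrix_vector_mul_linear] harmonic)
  then show ?thesis
    using le_root[OF harmonic] le_root[of "- v"] by simp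
qed

lemma Lrw_mult_vec: "(Lrw W *v x) $ i = x $ i - (\<Sum>j\<in>UNIV. Wbar W $ i $ j * x $ j)"
  by (simp add: Lrw_def matrix_vector_mult_diff_rdistrib) (simp add: matrix_vector_mult_def)

locale rooted_digraph =
  fixes W :: "real^'n^'n"
  assumes nonneg: "\<And>i j. 0 \<le> W $ i $ j"
    and no_loops: "\<And>i. W $ i $ i = 0"
    and outdeg_pos: "\<And>i. 0 < outdeg W i"
    and rooted: "\<exists>r. \<forall>u. (u, r) \<in> (edges W)\<^sup>*"
begin

lemma Wbar_nonneg: "0 \<le> Wbar W $ i $ j"
  using nonneg outdeg_pos by (simp add: Wbar_def less_imp_le)

lemma Wbar_diag: "Wbar W $ i $ i = 0"
  by (simp add: Wbar_def no_loops)

lemma Wbar_row_sum: "(\<Sum>j\<in>UNIV. Wbar W $ i $ j) = 1"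
  using outdeg_pos[of i] by (simp add: Wbar_def sum_divide_distrib[symmetric] outdeg_def[symmetric])

lemma Wbar_le_1: "Wbar W $ i $ j \<le> 1"
proof -
  have "W $ i $ j \<le> outdeg W i"
    unfolding outdeg_def by (rule member_le_sum) (use nonneg in auto)
  then show ?thesis
    using outdeg_pos[of i] by (simp add: Wbar_def)
qed

lemma edges_eq_Wbar_support: "edges W = {(i, j). 0 < Wbar W $ i $ j}"
proof -
  have "0 < Wbar W $ i $ j \<longleftrightarrow> 0 < W $ i $ j" for i j
    using outdeg_pos[of i] by (simp add: Wbar_def zero_less_divide_iff)
  then show ?thesis
    by (simp add: edges_def)
qed

lemma Lrw_kernel_selection_trivial:
  assumes K1: "1 \<le> K" and B: "B \<in> AK K"
    and Lv: "Lrw W *v v = 0" and Bv: "B *v v = 0"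
  shows "v = 0"
proof -
  obtain r where r: "\<And>u. (u, r) \<in> {(i, j). 0 < Wbar W $ i $ j}\<^sup>*"
    using rooted by (auto simp: edges_eq_Wbar_support)
  have "Wbar W *v v = v"
    using Lv by (simp add: Lrw_def matrix_vector_mult_diff_rdistrib)
  then have const: "v $ u = v $ r" for u
    by (rule stochastic_harmonic_constant[OF Wbar_nonneg Wbar_row_sum _ r])
  have "card {i. B $ i $ i = 1} \<noteq> 0"
    using AK_card_ones[OF B] K1 by simp
  then obtain k where k: "B $ k $ k = 1"
    by (metis (mono_tags, lifting) Collect_empty_eq card.empty)
  have "v $ k = 0"
    using arg_cong[OF Bv, of "\<lambda>w. w $ k"] by (simp add: AK_mult_vec[OF B] k)
  then show ?thesis
    using const[of k] const by (simp add: vec_eq_iff)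
qed

lemma Lrw_selection_posdef:
  assumes K1: "1 \<le> K" and B: "B \<in> AK K" and "0 < \<alpha>" and "0 < \<beta>" and v: "v \<noteq> 0"
  shows "0 < \<alpha> * ((Lrw W *v v) \<bullet> (Lrw W *v v)) + \<beta> * (v \<bullet> (B *v v))"
proof -
  have "Lrw W *v v \<noteq> 0 \<or> B *v v \<noteq> 0"
    using Lrw_kernel_selection_trivial[OF K1 B] v by blast
  then have "0 < (Lrw W *v v) \<bullet> (Lrw W *v v) \<or> 0 < (B *v v) \<bullet> (B *v v)"
    by simp
  then show ?thesis
    using \<open>0 < \<alpha>\<close> \<open>0 < \<beta>\<close> AK_quadratic_form[OF B, of v]
    by (smt (verit) inner_ge_zero mult_pos_pos mult_nonneg_nonneg)
qed

end

subsection \<open>The column constant\<close>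

lemma sum_mset_le_sum_take:
  fixes xs :: "real list"
  assumes "sorted_wrt (\<ge>) xs" and "B \<subseteq># mset xs"
  shows "sum_mset B \<le> sum_list (take (size B) xs)"
  using assms
proof (induction xs arbitrary: B)
  case Nil
  then show ?case by simp
next
  case (Cons a ys)
  have sorted_ys: "sorted_wrt (\<ge>) ys" and a_max: "\<And>b. b \<in> set ys \<Longrightarrow> b \<le> a"
    using Cons.prems(1) by simp_all
  show ?case
  proof (cases "B = {#}")
    case True
    then show ?thesis by simp
  next
    case False
    then obtain b where b: "b \<in># B" and b_max: "b \<le> a" and B': "B - {#b#} \<subseteq># mset ys"
    proof (cases "a \<in># B")
      case True
      then show ?thesis
        using Cons.prems(2) that[of a] by (simp add: subset_eq_diff_conv add.commute)
    next
      case a_notin: False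
      obtain b where b: "b \<in># B"
        using False by (meson multiset_nonemptyE)
      have "B \<subseteq># mset ys"
        using Cons.prems(2) a_notin by (simp add: inter_add_left1 subset_mset.inf.absorb_iff2)
      moreover from this have "b \<in> set ys"
        using b by (metis mset_subset_eqD set_mset_mset)
      ultimately show ?thesis
        using that[OF b] a_max by (meson diff_subset_eq_self subset_mset.trans)
    qed
    have "sum_mset (B - {#b#}) \<le> sum_list (take (size (B - {#b#})) ys)"
      by (rule Cons.IH[OF sorted_ys B'])
    moreover have "B = add_mset b (B - {#b#})"
      using b by simp
    ultimately show ?thesis
      using b_max by (metis add.commute add_mono size_add_mset sum_list_simps(2) sum_mset.add_mset take_Suc_Cons)
  qed
qed

lemma column_sum_le_col_desc:
  fixes M :: "real^'n^'n"
  assumes nonneg: "\<And>j. 0 \<le> M $ j $ i" and "card J \<le> m" and "m \<le> CARD('n)"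
  shows "(\<Sum>j\<in>J. M $ j $ i) \<le> (\<Sum>k<m. col_desc M i ! k)"
proof -
  define xs where "xs = col_desc M i"
  have mset_xs: "mset xs = image_mset (\<lambda>j. M $ j $ i) (mset_set UNIV)"
    by (simp add: xs_def col_desc_def)
  have len: "length xs = CARD('n)"
    using arg_cong[OF mset_xs, of size] by simp
  have xs_nonneg: "0 \<le> b" if "b \<in> set xs" for b
  proof -
    have "b \<in># image_mset (\<lambda>j. M $ j $ i) (mset_set UNIV)"
      using that by (simp flip: mset_xs)
    then show ?thesis
      using nonneg by auto
  qed
  define B where "B = image_mset (\<lambda>j. M $ j $ i) (mset_set J)"
  have "B \<subseteq># mset xs"
    unfolding B_def mset_xs by (intro image_mset_subseteq_mono subset_imp_msubset_mset_set) auto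
  then have "sum_mset B \<le> sum_list (take (card J) xs)"
    using sum_mset_le_sum_take[of xs B] by (simp add: xs_def col_desc_def sorted_wrt_rev B_def)
  also have "\<dots> \<le> sum_list (take m xs)"
  proof -
    have "take m xs = take (card J) xs @ take (m - card J) (drop (card J) xs)"
      using assms(2) by (metis le_add_diff_inverse take_add)
    moreover have "0 \<le> sum_list (take (m - card J) (drop (card J) xs))"
      by (rule sum_list_nonneg) (meson in_set_dropD in_set_takeD xs_nonneg)
    ultimately show ?thesis
      by simp
  qed
  also have "\<dots> = (\<Sum>k<m. xs ! k)"
    using assms(3) len by (simp add: sum_list_sum_nth atLeast0LessThan min_def)
  finally show ?thesis
    by (simp add: B_def xs_def sum_unfold_sum_mset)
qed

lemma neg_cross_sum_le:
  fixes c :: "'i \<Rightarrow> 'j \<Rightarrow> real"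
  assumes "\<And>i j. 0 \<le> c i j"
  shows "- 2 * (\<Sum>i\<in>I. \<Sum>j\<in>J. c i j * (x i * y j)) \<le> (\<Sum>i\<in>I. \<Sum>j\<in>J. c i j * (x i * x i + y j * y j))"
proof -
  have "- 2 * (c i j * (x i * y j)) \<le> c i j * (x i * x i + y j * y j)" for i j
  proof -
    have "0 \<le> c i j * ((x i + y j) * (x i + y j))"
      using assms by simp
    then show ?thesis
      by (simp add: algebra_simps)
  qed
  then show ?thesis
    unfolding sum_distrib_left by (intro sum_mono)
qed

context rooted_digraph
begin

lemma n_const_nonneg:
  assumes "K < CARD('n)"
  shows "0 \<le> n_const W K"
proof -
  have "0 \<le> (\<Sum>k<K - 1. col_desc (Wbar W) undefined ! k)"
    using column_sum_le_col_desc[of "Wbar W" undefined "{}" "K - 1"] Wbar_nonneg assms by simp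
  also have "\<dots> \<le> Max (range (\<lambda>i. \<Sum>k<K - 1. col_desc (Wbar W) i ! k))"
    by (intro Max_ge) auto
  finally show ?thesis
    by (simp add: n_const_def)
qed

lemma selection_column_bound:
  assumes K1: "1 \<le> K" and KN: "K < CARD('n)" and B: "B \<in> AK K"
  shows "3 * B $ j $ j + (\<Sum>i\<in>UNIV. B $ i $ i * Wbar W $ i $ j) \<le> n_const W K"
proof -
  define I where "I = {i. B $ i $ i = 1}"
  have card_I: "card I = K"
    using AK_card_ones[OF B] by (simp add: I_def)
  have column: "(\<Sum>i\<in>UNIV. B $ i $ i * Wbar W $ i $ j) = (\<Sum>i\<in>I. Wbar W $ i $ j)"
  proof -
    have "(\<Sum>i\<in>UNIV. B $ i $ i * Wbar W $ i $ j) = (\<Sum>i\<in>UNIV. if i \<in> I then Wbar W $ i $ j else 0)"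
      by (rule sum.cong) (use AK_diag_entry[OF B] in \<open>auto simp: I_def\<close>)
    then show ?thesis
      by (simp add: sum.If_cases)
  qed
  define T where "T = (\<Sum>k<K - 1. col_desc (Wbar W) j ! k)"
  have T: "3 + T \<le> n_const W K"
    unfolding n_const_def T_def by (intro add_left_mono Max_ge) auto
  have top: "(\<Sum>i\<in>J. Wbar W $ i $ j) \<le> T" if "card J \<le> K - 1" for J
    unfolding T_def by (rule column_sum_le_col_desc[OF Wbar_nonneg that]) (use KN in simp)
  \<comment> \<open>If j is selected, its own (zero) diagonal entry is one of the K summands; otherwise one
    summand is bounded by 1 and the other K - 1 by the K - 1 largest column entries.\<close>
  show ?thesis
  proof (cases "j \<in> I")
    case True
    have "(\<Sum>i\<in>I. Wbar W $ i $ j) = Wbar W $ j $ j + (\<Sum>i\<in>I - {j}. Wbar W $ i $ j)"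
      using True by (simp add: sum.remove)
    also have "\<dots> \<le> T"
      using top[of "I - {j}"] True card_I by (simp add: Wbar_diag)
    finally show ?thesis
      using True column T by (simp add: I_def)
  next
    case False
    obtain i0 where i0: "i0 \<in> I"
      using card_I K1 by fastforce
    have "(\<Sum>i\<in>I. Wbar W $ i $ j) = Wbar W $ i0 $ j + (\<Sum>i\<in>I - {i0}. Wbar W $ i $ j)"
      using i0 by (simp add: sum.remove)
    also have "\<dots> \<le> 1 + T"
      using Wbar_le_1[of i0 j] top[of "I - {i0}"] i0 card_I by simp
    finally show ?thesis
      using False AK_diag_entry[OF B, of j] column T by (auto simp: I_def)
  qed
qed

lemma selection_Lrw_cross_le_column_weights:
  assumes B: "B \<in> AK K"
  shows "2 * ((B *v x) \<bullet> (Lrw W *v x))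
    \<le> (\<Sum>j\<in>UNIV. (3 * B $ j $ j + (\<Sum>i\<in>UNIV. B $ i $ i * Wbar W $ i $ j)) * (x $ j * x $ j))"
proof -
  define a where "a i = B $ i $ i" for i
  define C where "C j = (\<Sum>i\<in>UNIV. a i * Wbar W $ i $ j)" for j
  have "(B *v x) \<bullet> (Lrw W *v x) = (\<Sum>i\<in>UNIV. a i * (x $ i * x $ i))
      - (\<Sum>i\<in>UNIV. \<Sum>j\<in>UNIV. a i * Wbar W $ i $ j * (x $ i * x $ j))"
    by (simp add: inner_vec_def AK_mult_vec[OF B] Lrw_mult_vec a_def algebra_simps
        sum_distrib_left sum_subtractf)
  moreover have "- 2 * (\<Sum>i\<in>UNIV. \<Sum>j\<in>UNIV. a i * Wbar W $ i $ j * (x $ i * x $ j))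
      \<le> (\<Sum>i\<in>UNIV. \<Sum>j\<in>UNIV. a i * Wbar W $ i $ j * (x $ i * x $ i + x $ j * x $ j))"
  proof (rule neg_cross_sum_le)
    show "0 \<le> a i * Wbar W $ i $ j" for i j
      using AK_diag_entry[OF B, of i] Wbar_nonneg[of i j] by (auto simp: a_def)
  qed
  moreover have "(\<Sum>i\<in>UNIV. \<Sum>j\<in>UNIV. a i * Wbar W $ i $ j * (x $ i * x $ i + x $ j * x $ j))
      = (\<Sum>i\<in>UNIV. a i * (x $ i * x $ i)) + (\<Sum>j\<in>UNIV. C j * (x $ j * x $ j))"
  proof -
    have "(\<Sum>i\<in>UNIV. \<Sum>j\<in>UNIV. a i * Wbar W $ i $ j * (x $ i * x $ i))
        = (\<Sum>i\<in>UNIV. a i * (x $ i * x $ i) * (\<Sum>j\<in>UNIV. Wbar W $ i $ j))"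
      by (simp add: sum_distrib_left algebra_simps)
    moreover have "(\<Sum>i\<in>UNIV. \<Sum>j\<in>UNIV. a i * Wbar W $ i $ j * (x $ j * x $ j))
        = (\<Sum>j\<in>UNIV. C j * (x $ j * x $ j))"
      by (subst sum.swap) (simp add: C_def sum_distrib_right)
    ultimately show ?thesis
      by (simp add: distrib_left sum.distrib Wbar_row_sum)
  qed
  ultimately have "2 * ((B *v x) \<bullet> (Lrw W *v x))
      \<le> 3 * (\<Sum>i\<in>UNIV. a i * (x $ i * x $ i)) + (\<Sum>j\<in>UNIV. C j * (x $ j * x $ j))"
    by linarith
  also have "\<dots> = (\<Sum>j\<in>UNIV. (3 * a j + C j) * (x $ j * x $ j))"
    by (simp add: sum.distrib sum_distrib_left distrib_right mult.assoc)
  finally show ?thesis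
    by (simp add: a_def C_def)
qed

lemma selection_Lrw_cross_bound:
  assumes K1: "1 \<le> K" and KN: "K < CARD('n)" and B: "B \<in> AK K"
  shows "2 * ((B *v x) \<bullet> (Lrw W *v x)) \<le> n_const W K * (x \<bullet> x)"
proof -
  have "2 * ((B *v x) \<bullet> (Lrw W *v x))
      \<le> (\<Sum>j\<in>UNIV. (3 * B $ j $ j + (\<Sum>i\<in>UNIV. B $ i $ i * Wbar W $ i $ j)) * (x $ j * x $ j))"
    by (rule selection_Lrw_cross_le_column_weights[OF B])
  also have "\<dots> \<le> (\<Sum>j\<in>UNIV. n_const W K * (x $ j * x $ j))"
    using selection_column_bound[OF K1 KN B] by (intro sum_mono mult_right_mono) simp_all
  also have "\<dots> = n_const W K * (x \<bullet> x)"
    by (simp add: inner_vec_def sum_distrib_left)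
  finally show ?thesis .
qed

end

subsection \<open>The choice of the constants\<close>

lemma quadratic_positive_root:
  fixes b mu :: real
  assumes "0 < mu"
  defines "r \<equiv> (- b + sqrt (b^2 + 4 * mu)) / 2"
  shows "0 < r" and "r^2 + b * r = mu"
proof -
  have disc: "0 \<le> b^2 + 4 * mu"
    using assms(1) by (simp add: add_nonneg_nonneg)
  then have sq: "(sqrt (b^2 + 4 * mu))^2 = b^2 + 4 * mu"
    by simp
  have "b < sqrt (b^2 + 4 * mu)"
  proof (rule ccontr)
    assume "\<not> ?thesis"
    then have "(sqrt (b^2 + 4 * mu))^2 \<le> b^2"
      using disc by (intro power_mono) auto
    then show False
      using sq assms(1) by simp
  qed
  then show "0 < r"
    by (simp add: r_def)
  show "r^2 + b * r = mu"
    using sq by (simp add: r_def power2_eq_square field_simps)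
qed

lemma scaled_cross_term_le:
  fixes cr xx n m q t :: real
  assumes "2 * cr \<le> n * xx" and "m * xx \<le> q" and "0 < m" and "0 \<le> n" and "0 \<le> t"
  shows "t * (2 * cr) \<le> t * (n / m) * q"
proof -
  have "t * (2 * cr) \<le> t * (n * xx)"
    using assms by (intro mult_left_mono) auto
  also have "\<dots> = t * (n / m) * (m * xx)"
    using assms(3) by simp
  also have "\<dots> \<le> t * (n / m) * q"
    using assms by (intro mult_left_mono) auto
  finally show ?thesis .
qed

text \<open>Both regimes reduce to the same estimate: with \<open>p = x\<^sup>T A x\<close>, \<open>s = \<parallel>L x\<parallel>\<^sup>2\<close> and
  \<open>cr = \<langle>A x, L x\<rangle>\<close>, the cross term is absorbed using \<open>2 cr \<le> n \<parallel>x\<parallel>\<^sup>2\<close> and the definition of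
  \<open>c = n / m\<close>, and the defining quadratic of \<open>\<rho>\<close> (resp. \<open>\<delta>\<close>) cancels what is left.\<close>

lemma small_mu_quadratic_bound:
  fixes p s cr xx n m eps mu c d r :: real
  assumes "0 \<le> p" and cross: "2 * cr \<le> n * xx" and min: "m * xx \<le> s + eps * p"
    and "0 < m" and "0 \<le> n" and "0 < eps" and "0 < mu" and "eps * mu < 1"
    and c: "c = n / m" and d: "d = sqrt (1 - eps * mu)"
    and r: "r = (- d * c + sqrt (d^2 * c^2 + 4 * mu)) / 2"
  shows "d^2 * p + 2 * d * r * cr + r^2 * s \<le> p + mu * s"
proof -
  have d2: "d^2 = 1 - eps * mu" and "0 < d"
    using \<open>eps * mu < 1\<close> by (simp_all add: d)
  have r': "r = (- (d * c) + sqrt ((d * c)^2 + 4 * mu)) / 2"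
    using r by (simp add: power_mult_distrib)
  have "0 < r" and root: "r^2 + d * c * r = mu"
    using quadratic_positive_root[OF \<open>0 < mu\<close>, of "d * c"] unfolding r'[symmetric] by simp_all
  have "2 * d * r * cr = (d * r) * (2 * cr)"
    by simp
  also have "\<dots> \<le> (d * r) * c * (s + eps * p)"
    unfolding c using \<open>0 < m\<close> \<open>0 \<le> n\<close> \<open>0 < d\<close> \<open>0 < r\<close>
    by (intro scaled_cross_term_le[OF cross min]) auto
  also have "(d * r) * c = mu - r^2"
    using root by (simp add: algebra_simps)
  finally have "2 * d * r * cr \<le> (mu - r^2) * (s + eps * p)" .
  moreover have "0 \<le> r^2 * (eps * p)"
    using \<open>0 < eps\<close> \<open>0 \<le> p\<close> by simp
  ultimately show ?thesis
    unfolding d2 by (simp add: algebra_simps)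
qed

lemma large_mu_quadratic_bound:
  fixes p s cr xx n m eps mu c d r :: real
  assumes "0 \<le> s" and cross: "2 * cr \<le> n * xx" and min: "m * xx \<le> p + eps * s"
    and "0 < m" and "0 \<le> n" and "0 < eps" and "1 < mu" and "eps < 1"
    and c: "c = n / m" and r: "r = sqrt (mu - eps)"
    and d: "d = (- r * c + sqrt (r^2 * c^2 + 4)) / 2"
  shows "d^2 * p + 2 * d * r * cr + r^2 * s \<le> p + mu * s"
proof -
  have r2: "r^2 = mu - eps" and "0 \<le> r"
    using \<open>1 < mu\<close> \<open>eps < 1\<close> by (simp_all add: r)
  have d': "d = (- (r * c) + sqrt ((r * c)^2 + 4 * 1)) / 2"
    using d by (simp add: power_mult_distrib)
  have "0 < d" and root: "d^2 + r * c * d = 1"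
    using quadratic_positive_root[of 1 "r * c"] unfolding d'[symmetric] by simp_all
  have "2 * d * r * cr = (d * r) * (2 * cr)"
    by simp
  also have "\<dots> \<le> (d * r) * c * (p + eps * s)"
    unfolding c using \<open>0 < m\<close> \<open>0 \<le> n\<close> \<open>0 < d\<close> \<open>0 \<le> r\<close>
    by (intro scaled_cross_term_le[OF cross min]) auto
  also have "(d * r) * c = 1 - d^2"
    using root by (simp add: algebra_simps)
  finally have "2 * d * r * cr \<le> (1 - d^2) * (p + eps * s)" .
  moreover have "0 \<le> d^2 * (eps * s)"
    using \<open>0 < eps\<close> \<open>0 \<le> s\<close> by simp
  ultimately show ?thesis
    unfolding r2 by (simp add: algebra_simps)
qed

lemma norm_combination_expand:
  fixes A L :: "real^'n^'n"
  shows "((d *\<^sub>R A + r *\<^sub>R L) *v x) \<bullet> ((d *\<^sub>R A + r *\<^sub>R L) *v x)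
    = d^2 * ((A *v x) \<bullet> (A *v x)) + 2 * d * r * ((A *v x) \<bullet> (L *v x)) + r^2 * ((L *v x) \<bullet> (L *v x))"
  by (simp add: matrix_vector_mult_add_rdistrib scaleR_matrix_vector_assoc[symmetric] inner_add_left
      inner_add_right inner_commute[of "L *v x" "A *v x"] power2_eq_square algebra_simps)

context rooted_digraph
begin

lemma symmetric_selection_Lrw_combination:
  assumes "B \<in> AK K"
  shows "transpose (B + eps *\<^sub>R (transpose (Lrw W) ** Lrw W)) = B + eps *\<^sub>R (transpose (Lrw W) ** Lrw W)"
    and "transpose (transpose (Lrw W) ** Lrw W + eps *\<^sub>R B) = transpose (Lrw W) ** Lrw W + eps *\<^sub>R B"
  using AK_transpose[OF assms] by (simp_all add: transpose_add transpose_scalar matrix_transpose_mul)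

lemma Min_lam_min_selection:
  fixes f :: "real^'n^'n \<Rightarrow> real^'n^'n"
  assumes K1: "1 \<le> K" and A: "A \<in> AK K" and "0 < a" and "0 < b"
    and sym: "\<And>B. B \<in> AK K \<Longrightarrow> transpose (f B) = f B"
    and form: "\<And>B v. v \<bullet> (f B *v v) = a * ((Lrw W *v v) \<bullet> (Lrw W *v v)) + b * (v \<bullet> (B *v v))"
  shows "0 < Min ((\<lambda>B. lam_min (f B)) ` AK K)"
    and "Min ((\<lambda>B. lam_min (f B)) ` AK K) * (x \<bullet> x)
      \<le> a * ((Lrw W *v x) \<bullet> (Lrw W *v x)) + b * (x \<bullet> (A *v x))"
proof -
  show "0 < Min ((\<lambda>B. lam_min (f B)) ` AK K)"
  proof (rule Min_lam_min_pos[OF AK_finite _ sym])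
    show "AK K \<noteq> ({} :: (real^'n^'n) set)"
      using A by auto
    fix B :: "real^'n^'n" and v :: "real^'n"
    assume "B \<in> AK K" and "v \<noteq> 0"
    then show "0 < v \<bullet> (f B *v v)"
      unfolding form using Lrw_selection_posdef[OF K1] \<open>0 < a\<close> \<open>0 < b\<close> by blast
  qed
  show "Min ((\<lambda>B. lam_min (f B)) ` AK K) * (x \<bullet> x)
      \<le> a * ((Lrw W *v x) \<bullet> (Lrw W *v x)) + b * (x \<bullet> (A *v x))"
    using Min_lam_min_le_rayleigh[OF AK_finite A sym] unfolding form .
qed

lemma delta_rho_bound_small_mu:
  assumes K1: "1 \<le> K" and KN: "K < CARD('n)" and A: "A \<in> AK K"
    and "mu \<le> 1" and "0 < mu" and "0 < eps" and "eps < 1"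
  defines "d \<equiv> delta_const W K eps mu" and "r \<equiv> rho_const W K eps mu"
  shows "d^2 * (x \<bullet> (A *v x)) + 2 * d * r * ((A *v x) \<bullet> (Lrw W *v x))
      + r^2 * ((Lrw W *v x) \<bullet> (Lrw W *v x)) \<le> x \<bullet> (A *v x) + mu * ((Lrw W *v x) \<bullet> (Lrw W *v x))"
proof -
  let ?f = "\<lambda>B. transpose (Lrw W) ** Lrw W + eps *\<^sub>R B"
  define m where "m = Min ((\<lambda>B. lam_min (?f B)) ` AK K)"
  have "v \<bullet> (?f B *v v) = 1 * ((Lrw W *v v) \<bullet> (Lrw W *v v)) + eps * (v \<bullet> (B *v v))" for B v
    by (simp add: quadratic_form_add_scaleR quadratic_form_transpose_mult)
  note selection = Min_lam_min_selection[where f = ?f and a = 1 and b = eps,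
      OF K1 A zero_less_one \<open>0 < eps\<close> symmetric_selection_Lrw_combination(2) this]
  have "0 < m"
    unfolding m_def by (rule selection(1))
  have bound: "m * (x \<bullet> x) \<le> (Lrw W *v x) \<bullet> (Lrw W *v x) + eps * (x \<bullet> (A *v x))"
    using selection(2)[where x = x] by (simp add: m_def)
  have "0 \<le> x \<bullet> (A *v x)"
    by (simp add: AK_quadratic_form[OF A])
  moreover have "eps * mu < 1"
    using \<open>mu \<le> 1\<close> \<open>0 < eps\<close> \<open>eps < 1\<close> by (smt (verit) mult_left_le)
  moreover have c: "c_const W K eps mu = n_const W K / m"
    using \<open>mu \<le> 1\<close> by (simp add: c_const_def m_def)
  moreover have d: "d = sqrt (1 - eps * mu)"
    using \<open>mu \<le> 1\<close> by (simp add: d_def delta_const_def)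
  moreover have "r = (- d * c_const W K eps mu + sqrt (d^2 * (c_const W K eps mu)^2 + 4 * mu)) / 2"
    using \<open>mu \<le> 1\<close> by (simp add: r_def rho_const_def d Let_def)
  ultimately show ?thesis
    using small_mu_quadratic_bound[OF _ selection_Lrw_cross_bound[OF K1 KN A] bound \<open>0 < m\<close>
        n_const_nonneg[OF KN] \<open>0 < eps\<close> \<open>0 < mu\<close>] by blast
qed

lemma delta_rho_bound_large_mu:
  assumes K1: "1 \<le> K" and KN: "K < CARD('n)" and A: "A \<in> AK K"
    and "1 < mu" and "0 < eps" and "eps < 1"
  defines "d \<equiv> delta_const W K eps mu" and "r \<equiv> rho_const W K eps mu"
  shows "d^2 * (x \<bullet> (A *v x)) + 2 * d * r * ((A *v x) \<bullet> (Lrw W *v x))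
      + r^2 * ((Lrw W *v x) \<bullet> (Lrw W *v x)) \<le> x \<bullet> (A *v x) + mu * ((Lrw W *v x) \<bullet> (Lrw W *v x))"
proof -
  let ?f = "\<lambda>B. B + eps *\<^sub>R (transpose (Lrw W) ** Lrw W)"
  define m where "m = Min ((\<lambda>B. lam_min (?f B)) ` AK K)"
  have "v \<bullet> (?f B *v v) = eps * ((Lrw W *v v) \<bullet> (Lrw W *v v)) + 1 * (v \<bullet> (B *v v))" for B v
    by (simp add: quadratic_form_add_scaleR quadratic_form_transpose_mult)
  note selection = Min_lam_min_selection[where f = ?f and a = eps and b = 1,
      OF K1 A \<open>0 < eps\<close> zero_less_one symmetric_selection_Lrw_combination(1) this]
  have "0 < m"
    unfolding m_def by (rule selection(1))
  have bound: "m * (x \<bullet> x) \<le> x \<bullet> (A *v x) + eps * ((Lrw W *v x) \<bullet> (Lrw W *v x))"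
    using selection(2)[where x = x] by (simp add: m_def add.commute)
  have "0 \<le> (Lrw W *v x) \<bullet> (Lrw W *v x)"
    by simp
  moreover have c: "c_const W K eps mu = n_const W K / m"
    using \<open>1 < mu\<close> by (simp add: c_const_def m_def)
  moreover have r: "r = sqrt (mu - eps)"
    using \<open>1 < mu\<close> by (simp add: r_def rho_const_def)
  moreover have "d = (- r * c_const W K eps mu + sqrt (r^2 * (c_const W K eps mu)^2 + 4)) / 2"
    using \<open>1 < mu\<close> by (simp add: d_def delta_const_def r Let_def)
  ultimately show ?thesis
    using large_mu_quadratic_bound[OF _ selection_Lrw_cross_bound[OF K1 KN A] bound \<open>0 < m\<close>
        n_const_nonneg[OF KN] \<open>0 < eps\<close> \<open>1 < mu\<close> \<open>eps < 1\<close>] by blast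
qed

lemma delta_rho_norm_le_quadratic_form:
  assumes K1: "1 \<le> K" and KN: "K < CARD('n)" and A: "A \<in> AK K"
    and "0 < mu" and "0 < eps" and "eps < 1"
  defines "M \<equiv> delta_const W K eps mu *\<^sub>R A + rho_const W K eps mu *\<^sub>R Lrw W"
  shows "(M *v x) \<bullet> (M *v x) \<le> x \<bullet> ((A + mu *\<^sub>R (transpose (Lrw W) ** Lrw W)) *v x)"
proof -
  have "(M *v x) \<bullet> (M *v x) = (delta_const W K eps mu)^2 * (x \<bullet> (A *v x))
      + 2 * delta_const W K eps mu * rho_const W K eps mu * ((A *v x) \<bullet> (Lrw W *v x))
      + (rho_const W K eps mu)^2 * ((Lrw W *v x) \<bullet> (Lrw W *v x))"
    unfolding M_def norm_combination_expand AK_quadratic_form[OF A] ..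
  also have "\<dots> \<le> x \<bullet> (A *v x) + mu * ((Lrw W *v x) \<bullet> (Lrw W *v x))"
    using delta_rho_bound_small_mu[OF K1 KN A _ \<open>0 < mu\<close> \<open>0 < eps\<close> \<open>eps < 1\<close>]
      delta_rho_bound_large_mu[OF K1 KN A _ \<open>0 < eps\<close> \<open>eps < 1\<close>] by fastforce
  also have "\<dots> = x \<bullet> ((A + mu *\<^sub>R (transpose (Lrw W) ** Lrw W)) *v x)"
    by (simp add: quadratic_form_add_scaleR quadratic_form_transpose_mult)
  finally show ?thesis .
qed

end

lemma sq_div_sq_le_of_le_mult:
  fixes g gamma G l :: real
  assumes "g^2 \<le> gamma * l" and "1 \<le> gamma" and "gamma \<le> G"
  shows "g^2 / G^2 \<le> l"
proof -
  have "gamma \<le> G^2"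
    using assms by (smt (verit) power2_eq_square mult_le_cancel_left1)
  then have "g^2 / G^2 \<le> g^2 / gamma"
    using assms(2) by (intro divide_left_mono) (auto intro!: mult_pos_pos)
  also have "\<dots> \<le> l"
    using assms(1,2) by (simp add: divide_le_eq mult.commute)
  finally show ?thesis .
qed

theorem proposition1:
  fixes W :: "real^'n^'n" and K :: nat and mu eps :: real
    and P :: "real^'n^'n \<Rightarrow> complex^'n^'n" and Lam :: "real^'n^'n \<Rightarrow> complex^'n^'n"
    and A S :: "real^'n^'n"
  assumes N2: "CARD('n) \<ge> 2"
    and K1: "1 \<le> K" and KN: "K < CARD('n)"
    and mu_pos: "mu > 0" and eps_pos: "0 < eps" and eps1: "eps < 1"
    and W_nonneg: "\<forall>i j. W $ i $ j \<ge> 0"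
    and W_diag: "\<forall>i. W $ i $ i = 0"
    and deg_pos: "\<forall>i. outdeg W i > 0"
    and root: "\<exists>v. \<forall>u. (u, v) \<in> (edges W)\<^sup>*"
    and diagonalization: "\<forall>B \<in> AK K. invertible (P B) \<and> is_diag (Lam B) \<and>
        cmat (delta_const W K eps mu *\<^sub>R B + rho_const W K eps mu *\<^sub>R Lrw W)
          = P B ** Lam B ** matrix_inv (P B)"
    and A_in: "A \<in> AK K"
    and S_diag: "is_diag S" and S_pos: "\<forall>i. S $ i $ i > 0"
    and gersh: "lam_minus_min (S ** (delta_const W K eps mu *\<^sub>R A + rho_const W K eps mu *\<^sub>R Lrw W)
                  ** matrix_inv S) \<ge> 0"
  shows "(lam_minus_min (S ** (delta_const W K eps mu *\<^sub>R A + rho_const W K eps mu *\<^sub>R Lrw W)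
            ** matrix_inv S))^2 / (Max (gamma ` P ` AK K))^2
         \<le> lam_min (A + mu *\<^sub>R (transpose (Lrw W) ** Lrw W))"
proof -
  interpret rooted_digraph W
    using W_nonneg W_diag deg_pos root by unfold_locales auto
  define M where "M = delta_const W K eps mu *\<^sub>R A + rho_const W K eps mu *\<^sub>R Lrw W"
  define X where "X = A + mu *\<^sub>R (transpose (Lrw W) ** Lrw W)"
  define g where "g = lam_minus_min (S ** M ** matrix_inv S)"
  have P_A: "invertible (P A)" "is_diag (Lam A)" "cmat M = P A ** Lam A ** matrix_inv (P A)"
    using diagonalization A_in by (auto simp: M_def)
  have Re_ge: "g \<le> Re lam" if "w \<noteq> 0" and "cmat M *v w = lam *s w" for w lam
    unfolding g_def using invertible_positive_diagonal[OF S_diag] S_pos that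
    by (blast intro: lam_minus_min_similar_le_Re_eigenvalue)
  obtain v where v: "v \<noteq> 0" "X *v v = lam_min X *\<^sub>R v"
    using lam_min_eigenvector symmetric_selection_Lrw_combination(1)[OF A_in, of mu] X_def by metis
  have "g^2 * (v \<bullet> v) \<le> gamma (P A) * ((M *v v) \<bullet> (M *v v))"
    using gersh by (intro diagonalizable_norm_lower_bound[OF P_A _ Re_ge]) (simp_all add: g_def M_def)
  also have "\<dots> \<le> gamma (P A) * (v \<bullet> (X *v v))"
    using delta_rho_norm_le_quadratic_form[OF K1 KN A_in mu_pos eps_pos eps1] gamma_ge_1[OF P_A(1)]
    by (intro mult_left_mono) (auto simp: M_def X_def)
  also have "\<dots> = gamma (P A) * lam_min X * (v \<bullet> v)"
    using v(2) by simp
  finally have "g^2 \<le> gamma (P A) * lam_min X"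
    using v(1) by simp
  moreover have "gamma (P A) \<le> Max (gamma ` P ` AK K)"
    using AK_finite A_in by (intro Max_ge) auto
  ultimately show ?thesis
    using sq_div_sq_le_of_le_mult gamma_ge_1[OF P_A(1)] by (simp add: g_def M_def X_def)
qed

end
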